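(* Let $E$ be an $AL$-space and let $F$ be a reflexive Banach lattice. Then every order bounded sequentially $uaw$-compact operator $T\colon E\to F$ has a weakly compact modulus $|T|$.
   Context: A net $(x_\alpha)$ in a Banach lattice $G$ is $uaw$-convergent to $x$ if $|x_\alpha-x|\wedge u\to 0$ weakly for every $u\in G_+$. A bounded operator $T\colon X\to G$ from a Banach space into a Banach lattice is sequentially $uaw$-compact if for every bounded sequence $(x_n)$ in $X$, the sequence $(Tx_n)$ has a subsequence that is $uaw$-convergent in $G$. *)

theory Defs
  imports "HOL-Analysis.Analysis"
begin

definition labs :: "'a::{lattice, uminus} \<Rightarrow> 'a" where
  "labs x = sup x (- x)"

class banach_lattice = banach + ordered_real_vector + lattice +
  assumes lattice_norm: "sup x (- x) \<le> sup y (- y) \<Longrightarrow> norm x \<le> norm y"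

definition AL_space :: "'a::banach_lattice itself \<Rightarrow> bool" where
  "AL_space _ \<longleftrightarrow> (\<forall>x y::'a. 0 \<le> x \<longrightarrow> 0 \<le> y \<longrightarrow> norm (x + y) = norm x + norm y)"

definition reflexive :: "'a::real_normed_vector itself \<Rightarrow> bool" where
  "reflexive _ \<longleftrightarrow> (\<forall>\<phi> :: ('a \<Rightarrow>\<^sub>L real) \<Rightarrow>\<^sub>L real. \<exists>x::'a. \<forall>f. blinfun_apply \<phi> f = blinfun_apply f x)"

definition weak_top :: "'a::real_normed_vector topology" where
  "weak_top = topology_generated_by {blinfun_apply f -` U | f U. open (U::real set)}"

definition weakly_convergent :: "(nat \<Rightarrow> 'a::real_normed_vector) \<Rightarrow> 'a \<Rightarrow> bool" where
  "weakly_convergent x l \<longleftrightarrow> (\<forall>f :: 'a \<Rightarrow>\<^sub>L real. (\<lambda>n. blinfun_apply f (x n)) \<longlonglongrightarrow> blinfun_apply f l)"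

definition uaw_convergent :: "(nat \<Rightarrow> 'a::banach_lattice) \<Rightarrow> 'a \<Rightarrow> bool" where
  "uaw_convergent x l \<longleftrightarrow>
     (\<forall>u. 0 \<le> u \<longrightarrow> weakly_convergent (\<lambda>n. inf (labs (x n - l)) u) 0)"

definition seq_uaw_compact_op :: "('a::real_normed_vector \<Rightarrow>\<^sub>L 'b::banach_lattice) \<Rightarrow> bool" where
  "seq_uaw_compact_op T \<longleftrightarrow>
     (\<forall>x :: nat \<Rightarrow> 'a. bounded (range x) \<longrightarrow>
        (\<exists>r l. strict_mono r \<and> uaw_convergent (\<lambda>n. blinfun_apply T (x (r n))) l))"

definition order_bounded_set :: "'a::order set \<Rightarrow> bool" where
  "order_bounded_set S \<longleftrightarrow> (\<exists>a b. S \<subseteq> {a..b})"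

definition order_bounded_op :: "('a::banach_lattice \<Rightarrow>\<^sub>L 'b::banach_lattice) \<Rightarrow> bool" where
  "order_bounded_op T \<longleftrightarrow>
     (\<forall>S. order_bounded_set S \<longrightarrow> order_bounded_set (blinfun_apply T ` S))"

definition op_le :: "('a::banach_lattice \<Rightarrow>\<^sub>L 'b::banach_lattice) \<Rightarrow> ('a \<Rightarrow>\<^sub>L 'b) \<Rightarrow> bool" where
  "op_le R S \<longleftrightarrow> (\<forall>x. 0 \<le> x \<longrightarrow> blinfun_apply R x \<le> blinfun_apply S x)"

definition is_modulus :: "('a::banach_lattice \<Rightarrow>\<^sub>L 'b::banach_lattice) \<Rightarrow> ('a \<Rightarrow>\<^sub>L 'b) \<Rightarrow> bool" where
  "is_modulus T S \<longleftrightarrow> order_bounded_op S \<and> op_le T S \<and> op_le (- T) S \<and>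
     (\<forall>R. order_bounded_op R \<longrightarrow> op_le T R \<longrightarrow> op_le (- T) R \<longrightarrow> op_le S R)"

definition weakly_compact_op :: "('a::real_normed_vector \<Rightarrow>\<^sub>L 'b::real_normed_vector) \<Rightarrow> bool" where
  "weakly_compact_op T \<longleftrightarrow>
     compactin weak_top (weak_top closure_of (blinfun_apply T ` cball 0 1))"

end

(* A reflexive Banach lattice is Dedekind
   complete: its closed balls are weakly compact (Banach-Alaoglu in the bidual), and its
   order intervals are weakly closed, because Hahn-Banach applied to x |-> norm of the
   negative part of x gives enough positive functionals.  Hence the Riesz-Kantorovich
   formula |T| x = sup {T u - T (x - u) | 0 <= u <= x} on the positive cone defines the
   modulus of every order bounded T; it is additive and positively homogeneous there, so it
   extends to a positive, hence bounded, operator.  Finally every bounded operator into a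
   reflexive space maps the unit ball into a weakly compact ball. *)

theory Submission
  imports Defs "HOL-Library.Lattice_Algebras"
begin

section \<open>Hahn--Banach for sublinear functionals\<close>

text \<open>Partial linear functionals are encoded by their graphs, so that Zorn's lemma can be
  applied to set inclusion; the last condition fixes the value at the point \<open>w\<close>.\<close>

definition dominated_linear_graph :: "('a::real_vector \<Rightarrow> real) \<Rightarrow> 'a \<Rightarrow> ('a \<times> real) set \<Rightarrow> bool" where
  "dominated_linear_graph p w G \<longleftrightarrow> (0,0) \<in> G
     \<and> (\<forall>x a y b. (x,a) \<in> G \<longrightarrow> (y,b) \<in> G \<longrightarrow> (x+y,a+b) \<in> G)
     \<and> (\<forall>x a c. (x,a) \<in> G \<longrightarrow> (c *\<^sub>R x, c * a) \<in> G)
     \<and> (\<forall>c. (0,c) \<in> G \<longrightarrow> c = 0) \<and> (\<forall>x a. (x,a) \<in> G \<longrightarrow> a \<le> p x) \<and> (w, p w) \<in> G"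

lemma dominated_linear_graphD:
  assumes "dominated_linear_graph p w G"
  shows "(0,0) \<in> G" "(x,a) \<in> G \<Longrightarrow> (y,b) \<in> G \<Longrightarrow> (x+y,a+b) \<in> G"
    "(x,a) \<in> G \<Longrightarrow> (c *\<^sub>R x, c * a) \<in> G" "(0,c) \<in> G \<Longrightarrow> c = 0"
    "(x,a) \<in> G \<Longrightarrow> a \<le> p x" "(w, p w) \<in> G"
  using assms unfolding dominated_linear_graph_def by blast+

lemma dominated_linear_graph_unique:
  assumes "dominated_linear_graph p w G" "(x,a) \<in> G" "(x,b) \<in> G"
  shows "a = b"
proof -
  have "(x + (-1) *\<^sub>R x, a + (-1) * b) \<in> G"
    using dominated_linear_graphD(2,3)[OF assms(1)] assms(2,3) by blast
  hence "(0, a - b) \<in> G" by simp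
  from dominated_linear_graphD(4)[OF assms(1) this] show ?thesis by simp
qed

text \<open>Apply the bound on \<open>c\<close> at \<open>(y/|t|, b/|t|)\<close> and rescale by positive homogeneity.\<close>

lemma sublinear_extension_bound:
  fixes p :: "'a::real_vector \<Rightarrow> real"
  assumes hom: "\<And>c x. c > 0 \<Longrightarrow> p (c *\<^sub>R x) = c * p x"
    and scale: "\<And>c. ((c *\<^sub>R y), c * b) \<in> G"
    and le_p: "\<And>x a. (x,a) \<in> G \<Longrightarrow> a \<le> p x"
    and lower: "\<And>y b. (y,b) \<in> G \<Longrightarrow> b - p (y - x0) \<le> c"
    and upper: "\<And>y b. (y,b) \<in> G \<Longrightarrow> c \<le> p (y + x0) - b"
  shows "b + t * c \<le> p (y + t *\<^sub>R x0)"
proof (cases t "0::real" rule: linorder_cases)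
  case equal
  thus ?thesis using le_p[OF scale[of 1]] by simp
next
  case greater
  have "t * c \<le> t * p ((1/t) *\<^sub>R y + x0) - b"
    using mult_left_mono[OF upper[OF scale[of "1/t"]], of t] greater by (simp add: right_diff_distrib)
  also have "t * p ((1/t) *\<^sub>R y + x0) = p (t *\<^sub>R ((1/t) *\<^sub>R y + x0))"
    using hom[OF greater] by simp
  also have "t *\<^sub>R ((1/t) *\<^sub>R y + x0) = y + t *\<^sub>R x0"
    using greater by (simp add: scaleR_add_right)
  finally show ?thesis by simp
next
  case less
  define s where "s = - t"
  have s: "s > 0" using less s_def by simp
  have "b - s * p ((1/s) *\<^sub>R y - x0) \<le> s * c"
    using mult_left_mono[OF lower[OF scale[of "1/s"]], of s] s by (simp add: right_diff_distrib)
  also have "s * p ((1/s) *\<^sub>R y - x0) = p (s *\<^sub>R ((1/s) *\<^sub>R y - x0))"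
    using hom[OF s] by simp
  also have "s *\<^sub>R ((1/s) *\<^sub>R y - x0) = y + t *\<^sub>R x0"
    using s by (simp add: scaleR_diff_right s_def)
  finally show ?thesis using s_def by simp
qed

lemma dominated_linear_graph_adjoin:
  fixes p :: "'a::real_vector \<Rightarrow> real"
  assumes hom: "\<And>c x. c > 0 \<Longrightarrow> p (c *\<^sub>R x) = c * p x"
    and G: "dominated_linear_graph p w G" and x0: "\<forall>a. (x0,a) \<notin> G"
    and lower: "\<And>y b. (y,b) \<in> G \<Longrightarrow> b - p (y - x0) \<le> c"
    and upper: "\<And>y b. (y,b) \<in> G \<Longrightarrow> c \<le> p (y + x0) - b"
  defines "G' \<equiv> {(y + t *\<^sub>R x0, b + t * c) | y b t. (y,b) \<in> G}"
  shows "dominated_linear_graph p w G'" and "G \<subset> G'"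
proof -
  note Gadd = dominated_linear_graphD(2)[OF G] and Gsc = dominated_linear_graphD(3)[OF G]
  have "G \<subseteq> G'"
  proof clarify
    fix y b assume "(y,b) \<in> G"
    hence "(y + 0 *\<^sub>R x0, b + 0 * c) \<in> G'" unfolding G'_def by blast
    thus "(y,b) \<in> G'" by simp
  qed
  moreover have "(0 + 1 *\<^sub>R x0, 0 + 1 * c) \<in> G'"
    unfolding G'_def using dominated_linear_graphD(1)[OF G] by blast
  ultimately show "G \<subset> G'" using x0 by auto
  show "dominated_linear_graph p w G'"
    unfolding dominated_linear_graph_def
  proof (intro conjI allI impI)
    show "(0,0) \<in> G'" "(w, p w) \<in> G'"
      using \<open>G \<subset> G'\<close> dominated_linear_graphD(1,6)[OF G] by blast+
  next
    fix x a y b assume "(x,a) \<in> G'" "(y,b) \<in> G'"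
    then obtain y1 b1 t1 y2 b2 t2 where "(y1,b1) \<in> G" "(y2,b2) \<in> G"
      "x = y1 + t1 *\<^sub>R x0" "a = b1 + t1 * c" "y = y2 + t2 *\<^sub>R x0" "b = b2 + t2 * c"
      unfolding G'_def by blast
    moreover have "(x+y, a+b) = ((y1+y2) + (t1+t2) *\<^sub>R x0, (b1+b2) + (t1+t2) * c)"
      using calculation by (simp add: algebra_simps)
    ultimately show "(x+y, a+b) \<in> G'" unfolding G'_def using Gadd by blast
  next
    fix x a d assume "(x,a) \<in> G'"
    then obtain y1 b1 t1 where "(y1,b1) \<in> G" "x = y1 + t1 *\<^sub>R x0" "a = b1 + t1 * c"
      unfolding G'_def by blast
    moreover have "(d *\<^sub>R x, d * a) = (d *\<^sub>R y1 + (d*t1) *\<^sub>R x0, (d*b1) + (d*t1) * c)"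
      using calculation by (simp add: algebra_simps)
    ultimately show "(d *\<^sub>R x, d * a) \<in> G'" unfolding G'_def using Gsc by blast
  next
    fix d assume "(0,d) \<in> G'"
    then obtain y1 b1 t1 where yb: "(y1,b1) \<in> G" and e: "0 = y1 + t1 *\<^sub>R x0" and d: "d = b1 + t1 * c"
      unfolding G'_def by blast
    have "t1 = 0"
    proof (rule ccontr)
      assume "t1 \<noteq> 0"
      hence "x0 = (- 1 / t1) *\<^sub>R y1" using e
        by (metis (no_types, lifting) add_eq_0_iff divide_inverse_commute inverse_eq_divide
            mult_minus_left nonzero_mult_div_cancel_left scaleR_minus_left scaleR_scaleR scaleR_one)
      thus False using Gsc[OF yb, of "-1/t1"] x0 by metis
    qed
    thus "d = 0" using e d dominated_linear_graphD(4)[OF G] yb by simp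
  next
    fix x a assume "(x,a) \<in> G'"
    then obtain y b t where "(y,b) \<in> G" "x = y + t *\<^sub>R x0" "a = b + t * c"
      unfolding G'_def by blast
    thus "a \<le> p x"
      using sublinear_extension_bound[OF hom Gsc dominated_linear_graphD(5)[OF G] lower upper] by blast
  qed
qed

text \<open>The bounds are compatible by subadditivity: \<open>b\<^sub>1 + b\<^sub>2 \<le> p ((y\<^sub>1 - x\<^sub>0) + (y\<^sub>2 + x\<^sub>0))\<close>.\<close>

lemma dominated_linear_graph_extend:
  fixes p :: "'a::real_vector \<Rightarrow> real"
  assumes sub: "\<And>x y. p (x + y) \<le> p x + p y"
    and hom: "\<And>c x. c > 0 \<Longrightarrow> p (c *\<^sub>R x) = c * p x"
    and G: "dominated_linear_graph p w G" and x0: "\<forall>a. (x0,a) \<notin> G"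
  shows "\<exists>G'. dominated_linear_graph p w G' \<and> G \<subset> G'"
proof -
  define L where "L = {b - p (y - x0) | y b. (y,b) \<in> G}"
  have gap: "b1 - p (y1 - x0) \<le> p (y2 + x0) - b2" if "(y1,b1) \<in> G" "(y2,b2) \<in> G" for y1 b1 y2 b2
  proof -
    have "b1 + b2 \<le> p ((y1 - x0) + (y2 + x0))"
      using dominated_linear_graphD(5)[OF G dominated_linear_graphD(2)[OF G that]] by simp
    also have "\<dots> \<le> p (y1 - x0) + p (y2 + x0)" by (rule sub)
    finally show ?thesis by simp
  qed
  note G0 = dominated_linear_graphD(1)[OF G]
  have "bdd_above L" unfolding L_def bdd_above_def using gap G0 by blast
  have "b - p (y - x0) \<le> Sup L" if "(y,b) \<in> G" for y b
    by (rule cSup_upper) (use that \<open>bdd_above L\<close> in \<open>auto simp: L_def\<close>)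
  moreover have "Sup L \<le> p (y + x0) - b" if "(y,b) \<in> G" for y b
    by (rule cSup_least) (use that G0 gap in \<open>auto simp: L_def\<close>)
  ultimately show ?thesis using dominated_linear_graph_adjoin[OF hom G x0, of "Sup L"] by blast
qed

lemma dominated_linear_graph_chain_Union:
  assumes C: "C \<in> chains {G. dominated_linear_graph p w G}" and "C \<noteq> {}"
  shows "dominated_linear_graph p w (\<Union>C)"
proof -
  have CA: "\<And>G. G \<in> C \<Longrightarrow> dominated_linear_graph p w G" using C unfolding chains_def by blast
  have ch: "\<And>G H. G \<in> C \<Longrightarrow> H \<in> C \<Longrightarrow> G \<subseteq> H \<or> H \<subseteq> G"
    using C unfolding chains_def chain_subset_def by blast
  obtain G0 where G0: "G0 \<in> C" using \<open>C \<noteq> {}\<close> by blast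
  show ?thesis unfolding dominated_linear_graph_def
  proof (intro conjI allI impI)
    show "(0,0) \<in> \<Union>C" "(w, p w) \<in> \<Union>C"
      using G0 CA dominated_linear_graphD(1,6) by blast+
  next
    fix x a y b assume "(x,a) \<in> \<Union>C" "(y,b) \<in> \<Union>C"
    then obtain G H where GH: "G \<in> C" "H \<in> C" "(x,a) \<in> G" "(y,b) \<in> H" by blast
    with ch[OF GH(1,2)] CA[THEN dominated_linear_graphD(2)] show "(x+y,a+b) \<in> \<Union>C"
      by blast
  next
    fix x a c assume "(x,a) \<in> \<Union>C"
    thus "(c *\<^sub>R x, c * a) \<in> \<Union>C" using CA[THEN dominated_linear_graphD(3)] by blast
  next
    fix c assume "(0,c) \<in> \<Union>C"
    thus "c = 0" using CA[THEN dominated_linear_graphD(4)] by blast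
  next
    fix x a assume "(x,a) \<in> \<Union>C"
    thus "a \<le> p x" using CA[THEN dominated_linear_graphD(5)] by blast
  qed
qed

lemma sublinear_line_graph:
  fixes p :: "'a::real_vector \<Rightarrow> real"
  assumes sub: "\<And>x y. p (x + y) \<le> p x + p y"
    and hom: "\<And>c x. c > 0 \<Longrightarrow> p (c *\<^sub>R x) = c * p x"
  shows "dominated_linear_graph p w {(t *\<^sub>R w, t * p w) | t. True}"
proof -
  have p0: "p 0 = 0" using hom[of 2 0] by simp
  have le: "t * p w \<le> p (t *\<^sub>R w)" for t
  proof (cases t "0::real" rule: linorder_cases)
    case less
    have "- p w \<le> p (- w)" using sub[of w "-w"] p0 by simp
    hence "(- t) * (- p w) \<le> (- t) * p (- w)" using less by (intro mult_left_mono) auto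
    thus ?thesis using hom[of "-t" "-w"] less by simp
  qed (use hom p0 in auto)
  show ?thesis unfolding dominated_linear_graph_def
  proof (intro conjI allI impI)
    show "(0, 0) \<in> {(t *\<^sub>R w, t * p w) | t. True}" "(w, p w) \<in> {(t *\<^sub>R w, t * p w) | t. True}"
      by (force intro: exI[of _ 0], force intro: exI[of _ 1])
  next
    fix x a y b assume "(x,a) \<in> {(t *\<^sub>R w, t * p w) | t. True}" "(y,b) \<in> {(t *\<^sub>R w, t * p w) | t. True}"
    then obtain s t where "x = s *\<^sub>R w" "a = s * p w" "y = t *\<^sub>R w" "b = t * p w" by blast
    thus "(x+y, a+b) \<in> {(t *\<^sub>R w, t * p w) | t. True}"
      by (intro CollectI exI[of _ "s+t"]) (simp add: algebra_simps)
  next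
    fix x a c assume "(x,a) \<in> {(t *\<^sub>R w, t * p w) | t. True}"
    then obtain s where "x = s *\<^sub>R w" "a = s * p w" by blast
    thus "(c *\<^sub>R x, c * a) \<in> {(t *\<^sub>R w, t * p w) | t. True}"
      by (intro CollectI exI[of _ "c * s"]) (simp add: algebra_simps)
  qed (use le p0 in auto)
qed

theorem hahn_banach_sublinear:
  fixes p :: "'a::real_vector \<Rightarrow> real"
  assumes sub: "\<And>x y. p (x + y) \<le> p x + p y"
    and hom: "\<And>c x. c > 0 \<Longrightarrow> p (c *\<^sub>R x) = c * p x"
  shows "\<exists>f. linear f \<and> (\<forall>x. f x \<le> p x) \<and> f w = p w"
proof -
  have "\<exists>M\<in>{G. dominated_linear_graph p w G}. \<forall>X\<in>{G. dominated_linear_graph p w G}. M \<subseteq> X \<longrightarrow> X = M"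
  proof (rule Zorn_Lemma2, intro ballI)
    fix C assume C: "C \<in> chains {G. dominated_linear_graph p w G}"
    show "\<exists>U\<in>{G. dominated_linear_graph p w G}. \<forall>X\<in>C. X \<subseteq> U"
      using sublinear_line_graph[OF sub hom] dominated_linear_graph_chain_Union[OF C]
      by (cases "C = {}") blast+
  qed
  then obtain M where M: "dominated_linear_graph p w M"
    and max: "\<And>X. dominated_linear_graph p w X \<Longrightarrow> M \<subseteq> X \<Longrightarrow> X = M" by blast
  have "\<exists>a. (x,a) \<in> M" for x
    using dominated_linear_graph_extend[OF sub hom M, of x] max by blast
  then obtain f where fM: "\<And>x. (x, f x) \<in> M" by metis
  note f_eq = dominated_linear_graph_unique[OF M fM]
  have "linear f"
  proof (rule linearI)
    show "f (x + y) = f x + f y" for x y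
      using f_eq[OF dominated_linear_graphD(2)[OF M fM fM]] .
    show "f (c *\<^sub>R x) = c *\<^sub>R f x" for c x
      using f_eq[OF dominated_linear_graphD(3)[OF M fM]] by simp
  qed
  moreover have "\<forall>x. f x \<le> p x" "f w = p w"
    using dominated_linear_graphD(5)[OF M fM] f_eq[OF dominated_linear_graphD(6)[OF M]] by auto
  ultimately show ?thesis by blast
qed

lemma linear_dominated_by_norm_Blinfun:
  fixes f :: "'a::real_normed_vector \<Rightarrow> real"
  assumes lin: "linear f" and le: "\<And>x. f x \<le> norm x"
  shows "blinfun_apply (Blinfun f) = f" "norm (Blinfun f) \<le> 1"
proof -
  have abs_le: "\<bar>f x\<bar> \<le> norm x" for x
    using le[of x] le[of "-x"] linear_neg[OF lin, of x] by simp
  have "bounded_linear f"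
    using lin abs_le unfolding bounded_linear_def bounded_linear_axioms_def
    by (metis linear_iff mult.commute mult_1 real_norm_def)
  thus app: "blinfun_apply (Blinfun f) = f" by (rule bounded_linear_Blinfun_apply)
  show "norm (Blinfun f) \<le> 1"
    by (rule norm_blinfun_bound) (simp_all add: app abs_le)
qed

lemma exists_norming_functional:
  fixes x :: "'a::real_normed_vector"
  shows "\<exists>f::'a \<Rightarrow>\<^sub>L real. norm f \<le> 1 \<and> blinfun_apply f x = norm x"
proof -
  obtain f where "linear f" "\<forall>y. f y \<le> norm y" "f x = norm x"
    using hahn_banach_sublinear[of norm x] by (auto intro: norm_triangle_ineq)
  thus ?thesis using linear_dominated_by_norm_Blinfun[of f] by metis
qed

lemma blinfun_separate_points:
  fixes x :: "'a::real_normed_vector"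
  assumes "\<And>f::'a \<Rightarrow>\<^sub>L real. f x = 0"
  shows "x = 0"
  using exists_norming_functional[of x] assms by auto

lemma cball_eq_functional_bounds:
  fixes r :: real
  assumes "0 \<le> r"
  shows "cball (0::'a::real_normed_vector) r = {x. \<forall>f::'a \<Rightarrow>\<^sub>L real. \<bar>blinfun_apply f x\<bar> \<le> r * norm f}"
proof (intro set_eqI iffI CollectI allI)
  fix x :: 'a and f :: "'a \<Rightarrow>\<^sub>L real" assume "x \<in> cball 0 r"
  hence "norm f * norm x \<le> norm f * r" by (intro mult_left_mono) auto
  thus "\<bar>blinfun_apply f x\<bar> \<le> r * norm f"
    using norm_blinfun[of f x] by (simp add: mult.commute)
next
  fix x :: 'a assume x: "x \<in> {x. \<forall>f::'a \<Rightarrow>\<^sub>L real. \<bar>blinfun_apply f x\<bar> \<le> r * norm f}"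
  obtain f :: "'a \<Rightarrow>\<^sub>L real" where "norm f \<le> 1" "blinfun_apply f x = norm x"
    using exists_norming_functional by blast
  moreover have "\<bar>blinfun_apply f x\<bar> \<le> r * norm f" using x by blast
  ultimately have "norm x \<le> r * norm f" by simp
  also have "\<dots> \<le> r" using \<open>norm f \<le> 1\<close> assms by (simp add: mult_left_le)
  finally show "x \<in> cball 0 r" by simp
qed

section \<open>Banach lattices and their positive functionals\<close>

context banach_lattice begin
subclass lattice_ab_group_add ..
end

lemma labs_nonneg: "0 \<le> labs (x::'a::banach_lattice)"
proof -
  have "x + - x \<le> labs x + labs x" unfolding labs_def by (intro add_mono) auto
  thus ?thesis by simp
qed

lemma labs_of_nonneg: "0 \<le> (x::'a::banach_lattice) \<Longrightarrow> labs x = x"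
  unfolding labs_def by (rule sup_absorb1) (use neg_le_0_iff_le order.trans in blast)

lemma labs_of_nonpos: "(x::'a::banach_lattice) \<le> 0 \<Longrightarrow> labs x = - x"
  unfolding labs_def by (rule sup_absorb2) (use neg_0_le_iff_le order.trans in blast)

lemma norm_mono_labs: "labs (x::'a::banach_lattice) \<le> labs y \<Longrightarrow> norm x \<le> norm y"
  using lattice_norm unfolding labs_def by blast

lemma norm_labs [simp]: "norm (labs (x::'a::banach_lattice)) = norm x"
  by (intro antisym norm_mono_labs) (simp_all add: labs_of_nonneg labs_nonneg)

lemma norm_mono_nonneg: "0 \<le> (a::'a::banach_lattice) \<Longrightarrow> a \<le> b \<Longrightarrow> norm a \<le> norm b"
  by (rule norm_mono_labs) (simp add: labs_of_nonneg)

lemma norm_le_if_labs_le: "labs (x::'a::banach_lattice) \<le> y \<Longrightarrow> norm x \<le> norm y"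
  by (rule norm_mono_labs) (metis labs_nonneg labs_of_nonneg order.trans)

lemma norm_le_if_between: "(a::'a::banach_lattice) \<le> d \<Longrightarrow> d \<le> b \<Longrightarrow> norm d \<le> norm a + norm b"
proof -
  assume ad: "a \<le> d" and db: "d \<le> b"
  have "d \<le> labs a + labs b"
    using db labs_nonneg[of a] unfolding labs_def by (metis add_increasing order.trans sup_ge1)
  moreover have "- d \<le> labs a + labs b"
    using ad labs_nonneg[of b] unfolding labs_def
    by (metis add_increasing2 neg_le_iff_le order.trans sup_ge2)
  ultimately have "labs d \<le> labs a + labs b" unfolding labs_def by simp
  hence "norm d \<le> norm (labs a + labs b)" by (rule norm_le_if_labs_le)
  also have "\<dots> \<le> norm a + norm b" using norm_triangle_ineq[of "labs a" "labs b"] by simp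
  finally show ?thesis .
qed

lemma nprt_scaleR: "0 < c \<Longrightarrow> nprt (c *\<^sub>R (x::'a::banach_lattice)) = c *\<^sub>R nprt x"
proof -
  assume c: "0 < c"
  have le: "c *\<^sub>R nprt y \<le> nprt (c *\<^sub>R y)" if "0 < c" for c and y :: 'a
  proof -
    have "c *\<^sub>R inf y 0 \<le> c *\<^sub>R y" "c *\<^sub>R inf y 0 \<le> c *\<^sub>R 0"
      using that by (intro scaleR_left_mono; simp)+
    thus ?thesis unfolding nprt_def by simp
  qed
  have "(1/c) *\<^sub>R nprt (c *\<^sub>R x) \<le> nprt x" using le[of "1/c" "c *\<^sub>R x"] c by simp
  hence "c *\<^sub>R ((1/c) *\<^sub>R nprt (c *\<^sub>R x)) \<le> c *\<^sub>R nprt x" using c by (intro scaleR_left_mono) auto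
  thus ?thesis using le[OF c, of x] c by (intro antisym) simp_all
qed

lemma norm_nprt_add_le: "norm (nprt (x + (y::'a::banach_lattice))) \<le> norm (nprt x) + norm (nprt y)"
proof -
  have "nprt x + nprt y \<le> nprt (x + y)" unfolding nprt_def by (simp add: add_mono add_nonpos_nonpos)
  hence "- nprt (x+y) \<le> - (nprt x + nprt y)" by (simp only: neg_le_iff_le)
  hence "labs (nprt (x+y)) \<le> labs (nprt x + nprt y)"
    by (simp only: labs_of_nonpos add_nonpos_nonpos nprt_le_zero)
  hence "norm (nprt (x+y)) \<le> norm (nprt x + nprt y)" by (rule norm_mono_labs)
  also have "\<dots> \<le> norm (nprt x) + norm (nprt y)" by (rule norm_triangle_ineq)
  finally show ?thesis .
qed

lemma norm_nprt_le: "norm (nprt (x::'a::banach_lattice)) \<le> norm x"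
proof (rule norm_mono_labs)
  have "labs (nprt x) = sup (-x) 0" by (simp add: labs_of_nonpos pprt_neg[symmetric] pprt_def)
  also have "\<dots> \<le> labs x" using labs_nonneg[of x] unfolding labs_def by simp
  finally show "labs (nprt x) \<le> labs x" .
qed

definition positive_functional :: "('a::banach_lattice \<Rightarrow>\<^sub>L real) \<Rightarrow> bool" where
  "positive_functional g \<longleftrightarrow> (\<forall>x. 0 \<le> x \<longrightarrow> 0 \<le> blinfun_apply g x)"

text \<open>Hahn--Banach for the sublinear functional \<open>x \<mapsto> \<parallel>x\<^sup>-\<parallel>\<close>: a functional below it is
  nonpositive on the positive cone.\<close>

lemma exists_positive_functional_negative:
  fixes w :: "'a::banach_lattice"
  assumes "\<not> 0 \<le> w"
  shows "\<exists>g. positive_functional g \<and> blinfun_apply g w < 0"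
proof -
  define p where "p x = norm (nprt x)" for x :: 'a
  obtain f where f: "linear f" "\<forall>x. f x \<le> p x" "f w = p w"
    using hahn_banach_sublinear[of p w]
    by (auto simp: p_def nprt_scaleR intro: norm_nprt_add_le)
  have "f x \<le> norm x" for x using f(2) norm_nprt_le[of x] unfolding p_def by (metis order.trans)
  note F = linear_dominated_by_norm_Blinfun[OF f(1) this]
  define g where "g = - Blinfun f"
  have "positive_functional g"
    using f(2) unfolding positive_functional_def g_def p_def
    by (simp add: F uminus_blinfun.rep_eq) (metis nprt_eq_0 norm_zero)
  moreover have "nprt w \<noteq> 0" using assms zero_le_iff_zero_nprt by blast
  hence "blinfun_apply g w < 0" using f(3) unfolding g_def p_def by (simp add: F uminus_blinfun.rep_eq)
  ultimately show ?thesis by blast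
qed

lemma nonneg_iff_positive_functionals:
  "0 \<le> (w::'a::banach_lattice) \<longleftrightarrow> (\<forall>g. positive_functional g \<longrightarrow> 0 \<le> blinfun_apply g w)"
  using exists_positive_functional_negative[of w] unfolding positive_functional_def by force

lemma atLeast_eq_INT_positive_functionals:
  "{z..} = (\<Inter>g\<in>Collect positive_functional. blinfun_apply g -` {blinfun_apply g (z::'a::banach_lattice)..})"
  using nonneg_iff_positive_functionals[of "_ - z"] by (auto simp: blinfun.diff_right)

lemma atMost_eq_INT_positive_functionals:
  "{..z} = (\<Inter>g\<in>Collect positive_functional. blinfun_apply g -` {..blinfun_apply g (z::'a::banach_lattice)})"
  using nonneg_iff_positive_functionals[of "z - _"] by (auto simp: blinfun.diff_right)

lemma closed_atLeast_banach_lattice: "closed {z::'a::banach_lattice..}"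
  unfolding atLeast_eq_INT_positive_functionals
  by (intro closed_INT ballI closed_vimage closed_atLeast linear_continuous_on blinfun.bounded_linear_right)

section \<open>The weak topology\<close>

lemma Union_weak_top_subbasis:
  "\<Union> {blinfun_apply f -` U |(f::'a::real_normed_vector \<Rightarrow>\<^sub>L real) U. open (U::real set)} = UNIV"
  by (rule top_le, rule Union_upper) (auto intro!: exI[of _ 0] exI[of _ UNIV])

lemma topspace_weak_top [simp]: "topspace (weak_top :: 'a::real_normed_vector topology) = UNIV"
  unfolding weak_top_def topology_generated_by_topspace by (rule Union_weak_top_subbasis)

lemma openin_weak_top_vimage:
  "open U \<Longrightarrow> openin weak_top (blinfun_apply (f::'a::real_normed_vector \<Rightarrow>\<^sub>L real) -` U)"
  unfolding weak_top_def by (rule topology_generated_by_Basis) blast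

lemma closedin_weak_top_vimage:
  "closed C \<Longrightarrow> closedin weak_top (blinfun_apply (f::'a::real_normed_vector \<Rightarrow>\<^sub>L real) -` C)"
proof -
  assume "closed C"
  moreover have "UNIV - blinfun_apply f -` C = blinfun_apply f -` (- C)" by auto
  ultimately show ?thesis unfolding closedin_def using openin_weak_top_vimage[of "- C" f] by auto
qed

lemma closedin_weak_top_INT:
  assumes "I \<noteq> {}" "\<And>i. i \<in> I \<Longrightarrow> closed (C i)"
  shows "closedin weak_top (\<Inter>i\<in>I. blinfun_apply (f i :: 'a::real_normed_vector \<Rightarrow>\<^sub>L real) -` C i)"
  using assms by (intro closedin_Inter) (auto intro: closedin_weak_top_vimage)

lemma closedin_weak_top_atLeast: "closedin weak_top {z::'a::banach_lattice..}"
  unfolding atLeast_eq_INT_positive_functionals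
  by (rule closedin_weak_top_INT) (auto simp: positive_functional_def intro!: exI[of _ 0])

lemma closedin_weak_top_atMost: "closedin weak_top {..z::'a::banach_lattice}"
  unfolding atMost_eq_INT_positive_functionals
  by (rule closedin_weak_top_INT) (auto simp: positive_functional_def intro!: exI[of _ 0])

lemma closedin_weak_top_cball: "closedin weak_top (cball (0::'a::real_normed_vector) r)"
proof (cases "0 \<le> r")
  case True
  have "cball (0::'a) r = (\<Inter>f\<in>UNIV. blinfun_apply f -` {-(r * norm f)..r * norm f})"
    unfolding cball_eq_functional_bounds[OF True]
    by (simp add: set_eq_iff abs_le_iff minus_le_iff conj_commute)
  thus ?thesis by (auto intro: closedin_weak_top_INT)
qed simp

lemma continuous_map_weak_top:
  assumes "\<And>f::'b::real_normed_vector \<Rightarrow>\<^sub>L real. continuous_map X euclideanreal (\<lambda>x. f (h x))"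
  shows "continuous_map X weak_top h"
  unfolding weak_top_def
proof (rule continuous_on_generated_topo)
  fix U assume "U \<in> {blinfun_apply f -` U |(f::'b \<Rightarrow>\<^sub>L real) U. open (U::real set)}"
  then obtain f V where "U = blinfun_apply f -` V" "open (V::real set)" by blast
  moreover have "h -` U \<inter> topspace X = {x \<in> topspace X. f (h x) \<in> V}" using calculation by auto
  ultimately show "openin X (h -` U \<inter> topspace X)"
    using openin_continuous_map_preimage[OF assms[of f], of V] by simp
qed (simp add: Union_weak_top_subbasis)

text \<open>By Tychonoff, as a closed subset of a product of compact intervals.\<close>

lemma compactin_bounded_linear_forms:
  "compactin (product_topology (\<lambda>_::('a::real_normed_vector \<Rightarrow>\<^sub>L real). euclideanreal) UNIV)
     {\<phi>. linear \<phi> \<and> (\<forall>f. \<bar>\<phi> f\<bar> \<le> r * norm f)}"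
proof -
  define X where "X = product_topology (\<lambda>_::('a \<Rightarrow>\<^sub>L real). euclideanreal) UNIV"
  have proj: "continuous_map X euclideanreal (\<lambda>\<phi>. \<phi> f)" for f
    unfolding X_def by (rule continuous_map_product_projection) simp
  define A where "A = (\<Inter>(f,g)\<in>UNIV. {\<phi> \<in> topspace X. \<phi> (f + g) - \<phi> f - \<phi> g \<in> {0}})"
  define S where "S = (\<Inter>(c,f)\<in>UNIV. {\<phi> \<in> topspace X. \<phi> (c *\<^sub>R f) - c * \<phi> f \<in> {0}})"
  define P0 where "P0 = PiE UNIV (\<lambda>f::'a \<Rightarrow>\<^sub>L real. {-(r * norm f)..r * norm f})"
  have "closedin X A" unfolding A_def
    by (rule closedin_Inter, simp, clarify, rule closedin_continuous_map_preimage)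
       (auto intro!: continuous_map_diff proj)
  moreover have "closedin X S" unfolding S_def
    by (rule closedin_Inter, simp, clarify, rule closedin_continuous_map_preimage)
       (auto intro!: continuous_map_diff continuous_map_real_mult_left proj)
  moreover have "compactin X P0" unfolding X_def P0_def by (simp add: compactin_PiE)
  ultimately have "compactin X ((A \<inter> S) \<inter> P0)" by (intro closed_Int_compactin) auto
  moreover have "(A \<inter> S) \<inter> P0 = {\<phi>. linear \<phi> \<and> (\<forall>f. \<bar>\<phi> f\<bar> \<le> r * norm f)}"
    unfolding A_def S_def P0_def X_def linear_iff PiE_UNIV_domain
    by (auto simp: Pi_iff abs_le_iff algebra_simps) (smt (verit))+
  ultimately show ?thesis unfolding X_def by simp
qed

lemma reflexive_bounded_linear_form_eval:
  assumes "reflexive TYPE('a::real_normed_vector)"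
    and lin: "linear \<phi>" and bound: "\<And>f::'a \<Rightarrow>\<^sub>L real. \<bar>\<phi> f\<bar> \<le> r * norm f"
  shows "\<exists>x::'a. \<forall>f. \<phi> f = blinfun_apply f x"
proof -
  have "bounded_linear \<phi>"
    using lin bound unfolding bounded_linear_def bounded_linear_axioms_def
    by (auto intro!: exI[of _ r] simp: mult.commute)
  moreover obtain x where "\<forall>f. blinfun_apply (Blinfun \<phi>) f = blinfun_apply f x"
    using assms(1) unfolding reflexive_def by blast
  ultimately show ?thesis by (auto simp: bounded_linear_Blinfun_apply)
qed

text \<open>Banach--Alaoglu in the bidual: by reflexivity the ball is a continuous image of the
  compact set of bounded linear forms on the dual.\<close>

theorem compactin_weak_top_cball:
  assumes refl: "reflexive TYPE('a::real_normed_vector)"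
  shows "compactin weak_top (cball (0::'a) r)"
proof (cases "0 \<le> r")
  case r: True
  define X where "X = product_topology (\<lambda>_::('a \<Rightarrow>\<^sub>L real). euclideanreal) UNIV"
  define P where "P = {\<phi>. linear \<phi> \<and> (\<forall>f::'a \<Rightarrow>\<^sub>L real. \<bar>\<phi> f\<bar> \<le> r * norm f)}"
  define \<Psi> where "\<Psi> \<phi> = (SOME x::'a. \<forall>f::'a \<Rightarrow>\<^sub>L real. \<phi> f = blinfun_apply f x)" for \<phi>
  have \<Psi>: "\<phi> f = blinfun_apply f (\<Psi> \<phi>)" if \<phi>: "\<phi> \<in> P" for \<phi> and f :: "'a \<Rightarrow>\<^sub>L real"
  proof -
    obtain x where "\<forall>f. \<phi> f = blinfun_apply f x"
      using reflexive_bounded_linear_form_eval[OF refl, of \<phi> r] \<phi> unfolding P_def by blast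
    hence "\<forall>f. \<phi> f = blinfun_apply f (\<Psi> \<phi>)" unfolding \<Psi>_def by (rule someI)
    thus ?thesis by blast
  qed
  have "continuous_map (subtopology X P) weak_top \<Psi>"
  proof (rule continuous_map_weak_top)
    fix f :: "'a \<Rightarrow>\<^sub>L real"
    have "continuous_map (subtopology X P) euclideanreal (\<lambda>\<phi>. \<phi> f)"
      unfolding X_def by (intro continuous_map_from_subtopology continuous_map_product_projection) simp
    thus "continuous_map (subtopology X P) euclideanreal (\<lambda>\<phi>. f (\<Psi> \<phi>))"
      by (rule continuous_map_eq) (simp add: \<Psi>)
  qed
  hence "compactin weak_top (\<Psi> ` P)"
    by (rule image_compactin[rotated])
       (simp add: compactin_subtopology compactin_bounded_linear_forms P_def X_def)
  moreover have "\<Psi> ` P = cball 0 r"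
  proof
    show "\<Psi> ` P \<subseteq> cball 0 r"
      unfolding cball_eq_functional_bounds[OF r] using \<Psi> by (auto simp: P_def)
  next
    show "cball 0 r \<subseteq> \<Psi> ` P"
    proof
      fix x :: 'a assume x: "x \<in> cball 0 r"
      define \<phi> where "\<phi> f = blinfun_apply f x" for f :: "'a \<Rightarrow>\<^sub>L real"
      have "\<phi> \<in> P" using x unfolding cball_eq_functional_bounds[OF r] P_def \<phi>_def
        by (auto simp: linear_iff blinfun.add_left blinfun.scaleR_left)
      moreover have "\<Psi> \<phi> = x"
        using \<Psi>[OF \<open>\<phi> \<in> P\<close>] blinfun_separate_points[of "\<Psi> \<phi> - x"]
        by (simp add: \<phi>_def blinfun.diff_right)
      ultimately show "x \<in> \<Psi> ` P" by blast
    qed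
  qed
  ultimately show ?thesis by simp
qed simp

section \<open>Reflexive Banach lattices are Dedekind complete\<close>

definition is_lub :: "'a::order set \<Rightarrow> 'a \<Rightarrow> bool" where
  "is_lub A s \<longleftrightarrow> (\<forall>a\<in>A. a \<le> s) \<and> (\<forall>c. (\<forall>a\<in>A. a \<le> c) \<longrightarrow> s \<le> c)"

lemma is_lub_unique: "is_lub A s \<Longrightarrow> is_lub A t \<Longrightarrow> s = t"
  unfolding is_lub_def by (meson order.antisym)

lemma finite_subset_ub_below_ubs:
  fixes a0 :: "'a::lattice"
  assumes "finite F" "F \<subseteq> A" "a0 \<in> A"
  shows "\<exists>d. a0 \<le> d \<and> (\<forall>a\<in>F. a \<le> d) \<and> (\<forall>c. (\<forall>a\<in>A. a \<le> c) \<longrightarrow> d \<le> c)"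
  using assms
proof (induction F rule: finite_induct)
  case (insert a F)
  then obtain d where "a0 \<le> d" "\<forall>a\<in>F. a \<le> d" "\<forall>c. (\<forall>a\<in>A. a \<le> c) \<longrightarrow> d \<le> c" by blast
  with insert.prems show ?case by (intro exI[of _ "sup a d"]) (auto intro: le_supI2)
qed auto

text \<open>The sets \<open>W a\<close> of upper bounds of \<open>a\<close> and \<open>a\<^sub>0\<close> lying below every upper bound of \<open>A\<close>
  are weakly closed, have the finite intersection property, and lie in a fixed ball, which
  is weakly compact; a common point is the supremum.\<close>

theorem reflexive_ex_lub:
  fixes A :: "'a::banach_lattice set"
  assumes refl: "reflexive TYPE('a)" and "A \<noteq> {}" and ub: "\<forall>a\<in>A. a \<le> b"
  shows "\<exists>s. is_lub A s"
proof -
  obtain a0 where a0: "a0 \<in> A" using \<open>A \<noteq> {}\<close> by blast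
  define UB where "UB = {c. \<forall>a\<in>A. a \<le> c}"
  define W where "W a = {a..} \<inter> {a0..} \<inter> \<Inter>((\<lambda>c. {..c}) ` UB)" for a
  define K where "K = cball (0::'a) (norm a0 + norm b)"
  have "b \<in> UB" using ub UB_def by blast
  have closed: "closedin weak_top (W a)" for a
    unfolding W_def using \<open>b \<in> UB\<close>
    by (intro closedin_Int closedin_Inter closedin_weak_top_atLeast) (auto intro: closedin_weak_top_atMost)
  have fip: "K \<inter> \<Inter>\<F> \<noteq> {}" if \<F>: "finite \<F>" "\<F> \<subseteq> W ` A" for \<F>
  proof -
    obtain F where F: "F \<subseteq> A" "finite F" "\<F> = W ` F"
      using finite_subset_image[OF \<F>] by blast
    then obtain d where "a0 \<le> d" "\<forall>a\<in>F. a \<le> d" "\<forall>c\<in>UB. d \<le> c"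
      using finite_subset_ub_below_ubs[OF F(2,1) a0] unfolding UB_def by blast
    moreover from this have "d \<in> K"
      using \<open>b \<in> UB\<close> norm_le_if_between[of a0 d b] unfolding K_def by simp
    ultimately have "d \<in> K \<inter> \<Inter>\<F>" unfolding F(3) W_def by auto
    thus ?thesis by blast
  qed
  have "compactin weak_top K" unfolding K_def by (rule compactin_weak_top_cball[OF refl])
  hence "K \<inter> \<Inter>(W ` A) \<noteq> {}"
    unfolding compactin_fip using closed fip by (metis (no_types, lifting) imageE)
  then obtain z where zW: "\<And>a. a \<in> A \<Longrightarrow> z \<in> W a" by blast
  have "is_lub A z" unfolding is_lub_def
  proof (intro conjI ballI allI impI)
    show "a \<le> z" if "a \<in> A" for a using zW[OF that] unfolding W_def by simp
    show "z \<le> c" if "\<forall>a\<in>A. a \<le> c" for c using zW[OF a0] that unfolding W_def UB_def by blast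
  qed
  thus ?thesis by blast
qed

section \<open>Positive operators are bounded\<close>

lemma nonneg_term_le_suminf:
  fixes a :: "nat \<Rightarrow> 'a::banach_lattice"
  assumes "summable a" and a0: "\<And>n. 0 \<le> a n"
  shows "a n \<le> suminf a"
proof -
  have "(\<Sum>k<N. a k) \<in> {a n..}" if "Suc n \<le> N" for N
  proof -
    have "(\<Sum>k<N. a k) = a n + (\<Sum>k\<in>{..<N} - {n}. a k)"
      using that by (simp add: sum.remove)
    moreover have "0 \<le> (\<Sum>k\<in>{..<N} - {n}. a k)" by (rule sum_nonneg) (use a0 in auto)
    ultimately show ?thesis by simp
  qed
  hence "eventually (\<lambda>N. (\<Sum>k<N. a k) \<in> {a n..}) sequentially"
    by (rule eventually_sequentiallyI)
  from Lim_in_closed_set[OF closed_atLeast_banach_lattice this _ summable_LIMSEQ[OF \<open>summable a\<close>]]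
  show ?thesis by simp
qed

lemma positive_linear_norm_le_labs:
  fixes S :: "'a::banach_lattice \<Rightarrow> 'b::banach_lattice"
  assumes lin: "linear S" and pos: "\<And>x. 0 \<le> x \<Longrightarrow> 0 \<le> S x"
  shows "norm (S x) \<le> norm (S (labs x))"
proof (rule norm_le_if_labs_le)
  have mono: "S a \<le> S b" if "a \<le> b" for a b
    using pos[of "b - a"] that linear_diff[OF lin] by simp
  have "S x \<le> S (labs x)" by (rule mono) (simp add: labs_def)
  moreover have "- S x \<le> S (labs x)" using mono[of "-x" "labs x"] linear_neg[OF lin] by (simp add: labs_def)
  ultimately show "labs (S x) \<le> S (labs x)" unfolding labs_def by simp
qed

lemma positive_linear_unbounded_witness:
  fixes S :: "'a::banach_lattice \<Rightarrow> 'b::banach_lattice"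
  assumes lin: "linear S" and pos: "\<And>x. 0 \<le> x \<Longrightarrow> 0 \<le> S x"
    and unbounded: "\<not> (\<exists>K. \<forall>x. norm (S x) \<le> norm x * K)"
  shows "\<exists>u. 0 \<le> u \<and> norm u \<le> 1 \<and> C \<le> norm (S u)"
proof -
  obtain x where x: "norm (S x) > norm x * C" using unbounded by (meson not_le)
  have "x \<noteq> 0" using x linear_0[OF lin] by auto
  define u where "u = (1 / norm x) *\<^sub>R labs x"
  have "0 \<le> u" unfolding u_def using labs_nonneg[of x] by (simp add: scaleR_nonneg_nonneg)
  moreover have "norm u \<le> 1" unfolding u_def using \<open>x \<noteq> 0\<close> by simp
  moreover have "C \<le> norm (S u)"
  proof -
    have "C < norm (S x) / norm x" using x \<open>x \<noteq> 0\<close> by (simp add: field_simps)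
    also have "\<dots> \<le> norm (S (labs x)) / norm x"
      using positive_linear_norm_le_labs[OF lin pos] by (simp add: divide_right_mono)
    also have "\<dots> = norm (S u)" unfolding u_def using linear_scale[OF lin] \<open>x \<noteq> 0\<close> by simp
    finally show ?thesis by simp
  qed
  ultimately show ?thesis by blast
qed

text \<open>If \<open>S\<close> were unbounded, choose positive \<open>u\<^sub>n\<close> in the unit ball with \<open>\<parallel>S u\<^sub>n\<parallel> \<ge> 4\<^sup>n\<close>:
  the vector \<open>w = \<Sum> 2\<^sup>-\<^sup>n u\<^sub>n\<close> dominates each \<open>2\<^sup>-\<^sup>n u\<^sub>n\<close>, so \<open>\<parallel>S w\<parallel> \<ge> 2\<^sup>n\<close> for all \<open>n\<close>.\<close>

theorem positive_linear_bounded: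
  fixes S :: "'a::banach_lattice \<Rightarrow> 'b::banach_lattice"
  assumes lin: "linear S" and pos: "\<And>x. 0 \<le> x \<Longrightarrow> 0 \<le> S x"
  shows "bounded_linear S"
proof -
  have "\<exists>K. \<forall>x. norm (S x) \<le> norm x * K"
  proof (rule ccontr)
    assume "\<not> (\<exists>K. \<forall>x. norm (S x) \<le> norm x * K)"
    hence "\<forall>n::nat. \<exists>u. 0 \<le> u \<and> norm u \<le> 1 \<and> 4 ^ n \<le> norm (S u)"
      using positive_linear_unbounded_witness[where S=S, OF lin pos] by blast
    then obtain u where "\<forall>n. 0 \<le> u n \<and> norm (u n) \<le> 1 \<and> 4 ^ n \<le> norm (S (u n))"
      by (auto dest: choice)
    hence u: "\<And>n. 0 \<le> u n" "\<And>n. norm (u n) \<le> 1" "\<And>n::nat. 4 ^ n \<le> norm (S (u n))"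
      by auto
    define a where "a n = (1/2::real) ^ n *\<^sub>R u n" for n
    have a0: "0 \<le> a n" for n unfolding a_def using u(1) by (simp add: scaleR_nonneg_nonneg)
    have na: "norm (a n) \<le> (1/2) ^ n" for n
      unfolding a_def using u(2)[of n] by (simp add: mult_left_le)
    have "summable (\<lambda>n. norm (a n))"
      by (rule summable_comparison_test'[of "\<lambda>n. (1/2::real)^n" 0]) (use na in \<open>auto intro: summable_geometric\<close>)
    hence "summable a" by (rule summable_norm_cancel)
    have "2 ^ n \<le> norm (S (suminf a))" for n :: nat
    proof -
      have "(2::real) ^ n = (1/2) ^ n * 4 ^ n" by (simp flip: power_mult_distrib)
      also have "\<dots> \<le> (1/2) ^ n * norm (S (u n))" using u(3)[of n] by (simp add: mult_left_mono)
      also have "\<dots> = norm (S (a n))" unfolding a_def using linear_scale[OF lin] by simp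
      also have "\<dots> \<le> norm (S (suminf a))"
      proof (rule norm_mono_nonneg)
        show "0 \<le> S (a n)" using pos[OF a0] .
        show "S (a n) \<le> S (suminf a)"
          using pos[of "suminf a - a n"] nonneg_term_le_suminf[OF \<open>summable a\<close> a0, of n]
          by (simp add: linear_diff[OF lin])
      qed
      finally show ?thesis .
    qed
    moreover obtain n :: nat where "norm (S (suminf a)) < 2 ^ n"
      using real_arch_pow[of 2 "norm (S (suminf a))"] by auto
    ultimately show False by (meson not_le)
  qed
  then obtain K where "\<And>x. norm (S x) \<le> norm x * K" by blast
  thus ?thesis by (rule bounded_linear_intro[OF linear_add[OF lin] linear_scale[OF lin]])
qed

section \<open>The Riesz--Kantorovich formula\<close>

lemma is_lub_plus:
  fixes A B :: "'a::ordered_ab_group_add set"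
  assumes A: "is_lub A s" and B: "is_lub B t"
  shows "is_lub {a + b | a b. a \<in> A \<and> b \<in> B} (s + t)"
  unfolding is_lub_def
proof (intro conjI ballI allI impI)
  fix q assume "q \<in> {a + b | a b. a \<in> A \<and> b \<in> B}"
  thus "q \<le> s + t" using A B unfolding is_lub_def by (auto intro: add_mono)
next
  fix c assume c: "\<forall>q\<in>{a + b | a b. a \<in> A \<and> b \<in> B}. q \<le> c"
  have "s \<le> c - b" if "b \<in> B" for b
  proof -
    have "\<forall>a\<in>A. a \<le> c - b" using c that by (simp add: le_diff_eq) blast
    thus ?thesis using A unfolding is_lub_def by blast
  qed
  hence "\<forall>b\<in>B. b \<le> c - s" by (simp add: le_diff_eq add.commute)
  hence "t \<le> c - s" using B unfolding is_lub_def by blast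
  thus "s + t \<le> c" by (simp add: le_diff_eq add.commute)
qed

lemma is_lub_scaleR:
  fixes A :: "'a::ordered_real_vector set"
  assumes A: "is_lub A s" and c: "0 < c"
  shows "is_lub ((*\<^sub>R) c ` A) (c *\<^sub>R s)"
  unfolding is_lub_def
proof (intro conjI ballI allI impI)
  show "q \<le> c *\<^sub>R s" if "q \<in> (*\<^sub>R) c ` A" for q
    using that A c unfolding is_lub_def by (auto intro: scaleR_left_mono)
next
  fix d assume "\<forall>q\<in>(*\<^sub>R) c ` A. q \<le> d"
  hence "a \<le> (1/c) *\<^sub>R d" if "a \<in> A" for a
    using that c scaleR_left_mono[of "c *\<^sub>R a" d "1/c"] by simp
  hence "s \<le> (1/c) *\<^sub>R d" using A unfolding is_lub_def by blast
  thus "c *\<^sub>R s \<le> d" using c scaleR_left_mono[of s "(1/c) *\<^sub>R d" c] by simp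
qed

lemma riesz_decomposition:
  fixes u x1 x2 :: "'a::lattice_ab_group_add"
  assumes "0 \<le> u" "u \<le> x1 + x2" "0 \<le> x1" "0 \<le> x2"
  shows "\<exists>u1 u2. u = u1 + u2 \<and> 0 \<le> u1 \<and> u1 \<le> x1 \<and> 0 \<le> u2 \<and> u2 \<le> x2"
proof (intro exI conjI)
  show "u = inf u x1 + (u - inf u x1)" by (metis add.commute diff_add_cancel)
  show "0 \<le> inf u x1" "inf u x1 \<le> x1" using assms by auto
  show "0 \<le> u - inf u x1" by (simp only: diff_ge_0_iff_ge inf.cobounded1)
  have "u \<le> inf (x2 + u) (x2 + x1)" using assms by (simp add: add.commute)
  hence "u \<le> x2 + inf u x1" by (simp only: add_inf_distrib_left)
  thus "u - inf u x1 \<le> x2" by (simp only: diff_le_eq)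
qed

definition lub :: "'a::order set \<Rightarrow> 'a" where
  "lub A = (SOME s. is_lub A s)"

lemma lub_eq: "is_lub A s \<Longrightarrow> lub A = s"
  unfolding lub_def using is_lub_unique by (blast intro: some_equality)

text \<open>For \<open>x \<ge> 0\<close>, \<open>|T| x = sup {T y | |y| \<le> x}\<close>; writing \<open>y = u - (x - u)\<close> with
  \<open>0 \<le> u \<le> x\<close> avoids the modulus on \<open>E\<close>.\<close>

definition modulus_set :: "('a::banach_lattice \<Rightarrow>\<^sub>L 'b::banach_lattice) \<Rightarrow> 'a \<Rightarrow> 'b set" where
  "modulus_set T x = {T u - T (x - u) | u. 0 \<le> u \<and> u \<le> x}"

definition modulus_pos :: "('a::banach_lattice \<Rightarrow>\<^sub>L 'b::banach_lattice) \<Rightarrow> 'a \<Rightarrow> 'b" where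
  "modulus_pos T x = lub (modulus_set T x)"

definition modulus_fun :: "('a::banach_lattice \<Rightarrow>\<^sub>L 'b::banach_lattice) \<Rightarrow> 'a \<Rightarrow> 'b" where
  "modulus_fun T x = modulus_pos T (pprt x) - modulus_pos T (- nprt x)"

lemma mem_modulus_set_iff:
  "q \<in> modulus_set T x \<longleftrightarrow> (\<exists>u. 0 \<le> u \<and> u \<le> x \<and> q = T u - T (x - u))"
  unfolding modulus_set_def by auto

lemma modulus_set_add:
  assumes "0 \<le> x1" "0 \<le> x2"
  shows "modulus_set T (x1 + x2) = {q1 + q2 | q1 q2. q1 \<in> modulus_set T x1 \<and> q2 \<in> modulus_set T x2}"
proof (intro set_eqI iffI)
  fix q assume "q \<in> modulus_set T (x1 + x2)"
  then obtain u where u: "0 \<le> u" "u \<le> x1 + x2" "q = T u - T (x1 + x2 - u)"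
    unfolding modulus_set_def by blast
  then obtain u1 u2 where "u = u1 + u2" "0 \<le> u1" "u1 \<le> x1" "0 \<le> u2" "u2 \<le> x2"
    using riesz_decomposition assms by metis
  moreover from this have "q = (T u1 - T (x1 - u1)) + (T u2 - T (x2 - u2))"
    using u(3) by (simp add: blinfun.add_right blinfun.diff_right algebra_simps)
  ultimately show "q \<in> {q1 + q2 | q1 q2. q1 \<in> modulus_set T x1 \<and> q2 \<in> modulus_set T x2}"
    unfolding modulus_set_def by blast
next
  fix q assume "q \<in> {q1 + q2 | q1 q2. q1 \<in> modulus_set T x1 \<and> q2 \<in> modulus_set T x2}"
  then obtain u1 u2 where u: "0 \<le> u1" "u1 \<le> x1" "0 \<le> u2" "u2 \<le> x2"
    and q: "q = (T u1 - T (x1 - u1)) + (T u2 - T (x2 - u2))"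
    unfolding modulus_set_def by blast
  have "0 \<le> u1 + u2" "u1 + u2 \<le> x1 + x2" using u by (simp_all add: add_mono)
  moreover have "q = T (u1 + u2) - T (x1 + x2 - (u1 + u2))"
    unfolding q by (simp add: blinfun.add_right blinfun.diff_right algebra_simps)
  ultimately show "q \<in> modulus_set T (x1 + x2)" unfolding modulus_set_def by blast
qed

lemma modulus_set_scaleR:
  assumes c: "0 < c"
  shows "modulus_set T (c *\<^sub>R x) = (*\<^sub>R) c ` modulus_set T x"
proof -
  have "(\<exists>u. q = T u - T (c *\<^sub>R x - u) \<and> 0 \<le> u \<and> u \<le> c *\<^sub>R x) \<longleftrightarrow>
        (\<exists>v. q = c *\<^sub>R (T v - T (x - v)) \<and> 0 \<le> v \<and> v \<le> x)" for q
  proof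
    assume "\<exists>v. q = c *\<^sub>R (T v - T (x - v)) \<and> 0 \<le> v \<and> v \<le> x"
    then obtain v where "q = c *\<^sub>R (T v - T (x - v))" "0 \<le> v" "v \<le> x" by blast
    thus "\<exists>u. q = T u - T (c *\<^sub>R x - u) \<and> 0 \<le> u \<and> u \<le> c *\<^sub>R x" using c
      by (intro exI[of _ "c *\<^sub>R v"])
         (simp add: blinfun.scaleR_right blinfun.diff_right scaleR_diff_right scaleR_left_mono
           scaleR_nonneg_nonneg)
  next
    assume "\<exists>u. q = T u - T (c *\<^sub>R x - u) \<and> 0 \<le> u \<and> u \<le> c *\<^sub>R x"
    then obtain u where "q = T u - T (c *\<^sub>R x - u)" "0 \<le> u" "u \<le> c *\<^sub>R x" by blast
    moreover from this have "(1/c) *\<^sub>R u \<le> x" using c scaleR_left_mono[of u "c *\<^sub>R x" "1/c"] by simp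
    ultimately show "\<exists>v. q = c *\<^sub>R (T v - T (x - v)) \<and> 0 \<le> v \<and> v \<le> x" using c
      by (intro exI[of _ "(1/c) *\<^sub>R u"])
         (simp add: blinfun.scaleR_right blinfun.diff_right scaleR_diff_right scaleR_nonneg_nonneg)
  qed
  thus ?thesis unfolding modulus_set_def by blast
qed

lemma order_bounded_op_if_positive:
  fixes S :: "'a::banach_lattice \<Rightarrow>\<^sub>L 'b::banach_lattice"
  assumes pos: "\<And>x. 0 \<le> x \<Longrightarrow> 0 \<le> blinfun_apply S x"
  shows "order_bounded_op S"
  unfolding order_bounded_op_def order_bounded_set_def
proof (intro allI impI)
  fix A :: "'a set" assume "\<exists>a b. A \<subseteq> {a..b}"
  then obtain a b where ab: "A \<subseteq> {a..b}" by blast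
  have "S a \<le> S x" "S x \<le> S b" if "x \<in> A" for x
    using that ab pos[of "x - a"] pos[of "b - x"] by (auto simp: blinfun.diff_right)
  hence "blinfun_apply S ` A \<subseteq> {S a..S b}" by auto
  thus "\<exists>a b. blinfun_apply S ` A \<subseteq> {a..b}" by blast
qed

context
  fixes T :: "'a::banach_lattice \<Rightarrow>\<^sub>L 'b::banach_lattice"
  assumes refl: "reflexive TYPE('b)" and ob: "order_bounded_op T"
begin

lemma modulus_set_bdd_above:
  assumes "0 \<le> x"
  shows "\<exists>b. \<forall>q\<in>modulus_set T x. q \<le> b"
proof -
  have "order_bounded_set {-x..x}"
    unfolding order_bounded_set_def by (intro exI[of _ "-x"] exI[of _ x]) simp
  hence "order_bounded_set (blinfun_apply T ` {-x..x})"
    using ob unfolding order_bounded_op_def by simp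
  then obtain lo hi where hi: "blinfun_apply T ` {-x..x} \<subseteq> {lo..hi}"
    unfolding order_bounded_set_def by blast
  have "q \<le> hi" if q: "q \<in> modulus_set T x" for q
  proof -
    obtain u where u: "0 \<le> u" "u \<le> x" "q = T u - T (x - u)"
      using q unfolding mem_modulus_set_iff by blast
    have "- x \<le> u - (x - u)" "u - (x - u) \<le> x"
      using u(1) add_mono[OF u(2) u(2)] by (simp_all add: algebra_simps)
    hence "T (u - (x - u)) \<in> {lo..hi}" using hi by (meson atLeastAtMost_iff image_subset_iff)
    thus ?thesis using u(3) by (simp add: blinfun.diff_right)
  qed
  thus ?thesis by blast
qed

lemma is_lub_modulus_pos:
  assumes "0 \<le> x"
  shows "is_lub (modulus_set T x) (modulus_pos T x)"
proof -
  have "modulus_set T x \<noteq> {}" unfolding modulus_set_def using assms by auto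
  then obtain s where "is_lub (modulus_set T x) s"
    using modulus_set_bdd_above[OF assms] reflexive_ex_lub[OF refl] by metis
  thus ?thesis unfolding modulus_pos_def using lub_eq by metis
qed

lemma modulus_pos_ge:
  assumes "0 \<le> x"
  shows "T x \<le> modulus_pos T x" "- T x \<le> modulus_pos T x"
proof -
  have "T x - T (x - x) \<in> modulus_set T x" "T 0 - T (x - 0) \<in> modulus_set T x"
    unfolding modulus_set_def using assms by blast+
  thus "T x \<le> modulus_pos T x" "- T x \<le> modulus_pos T x"
    using is_lub_modulus_pos[OF assms] unfolding is_lub_def by auto
qed

lemma modulus_pos_nonneg:
  assumes "0 \<le> x"
  shows "0 \<le> modulus_pos T x"
  using add_mono[OF modulus_pos_ge[OF assms]] by simp

lemma modulus_pos_add: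
  assumes "0 \<le> x1" "0 \<le> x2"
  shows "modulus_pos T (x1 + x2) = modulus_pos T x1 + modulus_pos T x2"
proof -
  have "is_lub (modulus_set T (x1 + x2)) (modulus_pos T x1 + modulus_pos T x2)"
    using is_lub_plus[OF is_lub_modulus_pos[OF assms(1)] is_lub_modulus_pos[OF assms(2)]]
    by (simp add: modulus_set_add[OF assms])
  thus ?thesis unfolding modulus_pos_def by (rule lub_eq)
qed

lemma modulus_pos_scaleR:
  assumes "0 \<le> x" "0 < c"
  shows "modulus_pos T (c *\<^sub>R x) = c *\<^sub>R modulus_pos T x"
proof -
  have "is_lub (modulus_set T (c *\<^sub>R x)) (c *\<^sub>R modulus_pos T x)"
    using is_lub_scaleR[OF is_lub_modulus_pos[OF assms(1)] assms(2)]
    by (simp add: modulus_set_scaleR[OF assms(2)])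
  thus ?thesis unfolding modulus_pos_def by (rule lub_eq)
qed

lemma modulus_pos_zero: "modulus_pos T 0 = 0"
  using modulus_pos_add[of 0 0] by simp

text \<open>Additivity on the cone makes \<open>modulus_fun\<close> independent of the chosen decomposition.\<close>

lemma modulus_fun_diff:
  assumes "0 \<le> a" "0 \<le> b"
  shows "modulus_fun T (a - b) = modulus_pos T a - modulus_pos T b"
proof -
  have "a + (- nprt (a - b)) = pprt (a - b) + b" using prts[of "a - b"] by (simp add: algebra_simps)
  hence "modulus_pos T a + modulus_pos T (- nprt (a - b)) = modulus_pos T (pprt (a - b)) + modulus_pos T b"
    using modulus_pos_add assms by (metis neg_0_le_iff_le nprt_le_zero zero_le_pprt)
  thus ?thesis unfolding modulus_fun_def by (simp add: algebra_simps)
qed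

lemma modulus_fun_nonneg: "0 \<le> x \<Longrightarrow> modulus_fun T x = modulus_pos T x"
  using modulus_fun_diff[of x 0] modulus_pos_zero by simp

lemma modulus_fun_add: "modulus_fun T (x + y) = modulus_fun T x + modulus_fun T y"
proof -
  have "x + y = (pprt x + nprt x) + (pprt y + nprt y)" by (simp flip: prts)
  also have "\<dots> = (pprt x + pprt y) - (- nprt x + - nprt y)" by (simp add: algebra_simps)
  finally have "modulus_fun T (x + y) = modulus_fun T ((pprt x + pprt y) - (- nprt x + - nprt y))"
    by simp
  also have "\<dots> = modulus_pos T (pprt x + pprt y) - modulus_pos T (- nprt x + - nprt y)"
    by (rule modulus_fun_diff; intro add_nonneg_nonneg; simp)
  also have "\<dots> = modulus_fun T x + modulus_fun T y"
    using modulus_pos_add[of "pprt x" "pprt y"] modulus_pos_add[of "- nprt x" "- nprt y"]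
    by (simp add: modulus_fun_def)
  finally show ?thesis .
qed

lemma modulus_fun_uminus: "modulus_fun T (- x) = - modulus_fun T x"
proof -
  have "- x = (- nprt x) - pprt x" using prts[of x] by (simp add: algebra_simps)
  hence "modulus_fun T (- x) = modulus_pos T (- nprt x) - modulus_pos T (pprt x)"
    by (simp only:) (rule modulus_fun_diff; simp)
  thus ?thesis by (simp add: modulus_fun_def)
qed

lemma modulus_fun_scaleR_pos:
  assumes "0 < c"
  shows "modulus_fun T (c *\<^sub>R x) = c *\<^sub>R modulus_fun T x"
proof -
  have "c *\<^sub>R x = c *\<^sub>R pprt x - c *\<^sub>R (- nprt x)"
    using prts[of x] by (simp add: algebra_simps flip: scaleR_right_distrib)
  hence "modulus_fun T (c *\<^sub>R x) = modulus_pos T (c *\<^sub>R pprt x) - modulus_pos T (c *\<^sub>R (- nprt x))"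
    using assms by (simp only:)
      (rule modulus_fun_diff; simp add: scaleR_nonneg_nonneg scaleR_nonneg_nonpos less_imp_le)
  thus ?thesis using assms modulus_pos_scaleR[of "pprt x" c] modulus_pos_scaleR[of "- nprt x" c]
    by (simp add: modulus_fun_def scaleR_diff_right)
qed

lemma linear_modulus_fun: "linear (modulus_fun T)"
proof (rule linearI)
  show "modulus_fun T (c *\<^sub>R x) = c *\<^sub>R modulus_fun T x" for c x
  proof (cases c "0::real" rule: linorder_cases)
    case less
    have "modulus_fun T (c *\<^sub>R x) = modulus_fun T (- ((- c) *\<^sub>R x))" by simp
    thus ?thesis using less by (simp only: modulus_fun_uminus modulus_fun_scaleR_pos) simp
  qed (simp_all add: modulus_fun_scaleR_pos modulus_fun_nonneg modulus_pos_zero)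
qed (rule modulus_fun_add)

lemma modulus_pos_le:
  assumes R: "op_le T R" "op_le (- T) R" and x: "0 \<le> x"
  shows "modulus_pos T x \<le> R x"
proof -
  have "q \<le> R x" if q: "q \<in> modulus_set T x" for q
  proof -
    obtain u where u: "0 \<le> u" "u \<le> x" "q = T u - T (x - u)"
      using q unfolding mem_modulus_set_iff by blast
    have "q = T u + - T (x - u)" using u(3) by simp
    also have "\<dots> \<le> R u + R (x - u)"
      using R u(1,2) unfolding op_le_def by (intro add_mono) (simp_all add: uminus_blinfun.rep_eq)
    also have "\<dots> = R x" by (simp add: blinfun.diff_right)
    finally show ?thesis .
  qed
  thus ?thesis using is_lub_modulus_pos[OF x] unfolding is_lub_def by blast
qed

lemma bounded_linear_modulus_fun: "bounded_linear (modulus_fun T)"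
  by (rule positive_linear_bounded[OF linear_modulus_fun])
     (simp add: modulus_fun_nonneg modulus_pos_nonneg)

theorem is_modulus_Blinfun_modulus_fun: "is_modulus T (Blinfun (modulus_fun T))"
proof -
  define S where "S = Blinfun (modulus_fun T)"
  have S: "0 \<le> x \<Longrightarrow> S x = modulus_pos T x" for x
    unfolding S_def by (simp add: bounded_linear_Blinfun_apply[OF bounded_linear_modulus_fun]
        modulus_fun_nonneg)
  have "order_bounded_op S" by (rule order_bounded_op_if_positive) (simp add: S modulus_pos_nonneg)
  moreover have "op_le T S" "op_le (- T) S"
    unfolding op_le_def using modulus_pos_ge by (simp_all add: S uminus_blinfun.rep_eq)
  moreover have "op_le S R" if "op_le T R" "op_le (- T) R" for R
    unfolding op_le_def using modulus_pos_le[OF that] by (simp add: S)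
  ultimately show ?thesis unfolding is_modulus_def S_def by blast
qed

end

section \<open>Bounded operators into reflexive spaces are weakly compact\<close>

theorem weakly_compact_op_if_reflexive:
  fixes T :: "'a::real_normed_vector \<Rightarrow>\<^sub>L 'b::real_normed_vector"
  assumes "reflexive TYPE('b)"
  shows "weakly_compact_op T"
proof -
  have "norm (T x) \<le> norm T" if "norm x \<le> 1" for x
    using norm_blinfun[of T x] mult_left_le[OF that norm_ge_zero[of T]] by linarith
  hence "blinfun_apply T ` cball 0 1 \<subseteq> cball 0 (norm T)" by auto
  hence "weak_top closure_of (blinfun_apply T ` cball 0 1) \<subseteq> cball 0 (norm T)"
    by (rule closure_of_minimal[OF _ closedin_weak_top_cball])
  thus ?thesis unfolding weakly_compact_op_def
    by (rule closed_compactin[OF compactin_weak_top_cball[OF assms]]) simp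
qed

theorem theorem2p13:
  fixes T :: "'e::banach_lattice \<Rightarrow>\<^sub>L 'f::banach_lattice"
  assumes "AL_space TYPE('e)"
    and "reflexive TYPE('f)"
    and "order_bounded_op T"
    and "seq_uaw_compact_op T"
  shows "\<exists>S. is_modulus T S \<and> weakly_compact_op S"
  using is_modulus_Blinfun_modulus_fun[OF assms(2,3)] weakly_compact_op_if_reflexive[OF assms(2)]
  by blast

end
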